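(* For every fixed integer $d\ge 3$, as $h\to\infty$, $$\log_{d-1} |G(d,h)| \sim c_d\,(d-1)^h,\qquad\text{where}\quad c_d := d(d-2)\sum_{n=0}^{\infty}(d-1)^{-2-n}\log_{d-1}\frac{(d-1)^{n+2}-1}{d-2}.$$
   Context: Let $\mathcal{T}(d,h)$ be the rooted tree in which the root $0$ has $d$ children, every vertex at distance $1,\dots,h-1$ from the root has $d-1$ children, and the vertices at distance $h$ are leaves. Let $V$ be its vertex set, $A$ its adjacency matrix, $\Delta := dI-A$, and $\Lambda\subset\mathbb{Z}^V$ the lattice spanned by the rows of $\Delta$. Then $G(d,h):=\mathbb{Z}^V/\Lambda$ and $|G(d,h)|$ is its order. $f(h)\sim g(h)$ means $f(h)/g(h)\to1$. *)

theory Defs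
  imports "HOL-Analysis.Analysis" "HOL-Library.Landau_Symbols"
begin

text \<open>Vertices of the tree T(d,h) are encoded as paths from the root: the root is the
empty list; a vertex at depth k is a list of length k whose first entry is < d
(choice among the d children of the root) and whose later entries are < d - 1.\<close>

definition tree_vertices :: "nat \<Rightarrow> nat \<Rightarrow> nat list set" where
  "tree_vertices d h = {xs. length xs \<le> h \<and>
      (\<forall>i<length xs. if i = 0 then xs ! i < d else xs ! i < d - 1)}"

definition tree_adj :: "nat list \<Rightarrow> nat list \<Rightarrow> bool" where
  "tree_adj u v \<longleftrightarrow> (\<exists>c. v = u @ [c]) \<or> (\<exists>c. u = v @ [c])"

definition tree_Delta :: "nat \<Rightarrow> nat list \<Rightarrow> nat list \<Rightarrow> int" where
  "tree_Delta d u v = (if u = v then int d else 0) - (if tree_adj u v then 1 else 0)"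

definition ZV :: "nat \<Rightarrow> nat \<Rightarrow> (nat list \<Rightarrow> int) set" where
  "ZV d h = {x. \<forall>v. v \<notin> tree_vertices d h \<longrightarrow> x v = 0}"

definition tree_lattice :: "nat \<Rightarrow> nat \<Rightarrow> (nat list \<Rightarrow> int) set" where
  "tree_lattice d h = {x. \<exists>c :: nat list \<Rightarrow> int. x = (\<lambda>v. if v \<in> tree_vertices d h
      then (\<Sum>u\<in>tree_vertices d h. c u * tree_Delta d u v) else 0)}"

definition sandpile_group :: "nat \<Rightarrow> nat \<Rightarrow> (nat list \<Rightarrow> int) set set" where
  "sandpile_group d h = ZV d h // {(x, y). x \<in> ZV d h \<and> y \<in> ZV d h \<and> x - y \<in> tree_lattice d h}"

definition c_const :: "nat \<Rightarrow> real" where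
  "c_const d = real d * (real d - 2) *
     (\<Sum>n. (real d - 1) powr (- 2 - real n) *
           log (real d - 1) (((real d - 1) ^ (n + 2) - 1) / (real d - 2)))"

end

theory Submission
  imports Defs "Jordan_Normal_Form.Determinant" "HOL-Library.List_Lexorder" "HOL-Real_Asymp.Real_Asymp"
begin

text \<open>Integer row operations bring \<open>\<Delta>\<close> to triangular form \<open>B\<close> without changing the lattice
  \<open>\<Lambda>\<close> or \<open>|det \<Delta>|\<close>, and the box \<open>0 \<le> x_i < |B_ii|\<close> is a transversal of \<open>\<int>^V / \<Lambda>\<close>; hence
  \<open>|G(d,h)| = |det \<Delta>|\<close>. Eliminating the tree from the leaves upwards factors \<open>\<Delta> = U^T D U\<close> with
  \<open>U\<close> unitriangular and \<open>D\<close> diagonal, the entry of \<open>D\<close> at a vertex depending only on its depth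
  \<open>k\<close>: with \<open>b = d - 1\<close> and the repunits \<open>q_m = 1 + b + ... + b^m\<close> it is \<open>q_(h-k+1) / q_(h-k)\<close> for
  \<open>k \<ge> 1\<close> and \<open>d b^h / q_h\<close> at the root. As there are \<open>d b^(k-1)\<close> vertices at depth \<open>k\<close>, the
  logarithm \<open>log_b |G(d,h)|\<close> telescopes to \<open>d b^h \<Sum>_(m<h) (log_b q_(m+1) - log_b q_m) / b^(m+1)\<close>
  up to an error \<open>O(h)\<close>, and this sum converges to \<open>(b - 1) \<Sum>_n log_b q_(n+1) / b^(n+2) = c_d / d\<close>.\<close>

section \<open>Cokernels of integer matrices\<close>

definition supported_on :: "'a set \<Rightarrow> ('a \<Rightarrow> int) set" where
  "supported_on V = {x. \<forall>v. v \<notin> V \<longrightarrow> x v = 0}"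

definition row_lattice :: "'a set \<Rightarrow> ('a \<Rightarrow> 'a \<Rightarrow> int) \<Rightarrow> ('a \<Rightarrow> int) set" where
  "row_lattice V M = {x. \<exists>c. x = (\<lambda>v. if v \<in> V then (\<Sum>u\<in>V. c u * M u v) else 0)}"

definition lattice_cong :: "'a set \<Rightarrow> ('a \<Rightarrow> 'a \<Rightarrow> int) \<Rightarrow> (('a \<Rightarrow> int) \<times> ('a \<Rightarrow> int)) set" where
  "lattice_cong V M = {(x, y). x \<in> supported_on V \<and> y \<in> supported_on V \<and> x - y \<in> row_lattice V M}"

definition cokernel :: "'a set \<Rightarrow> ('a \<Rightarrow> 'a \<Rightarrow> int) \<Rightarrow> ('a \<Rightarrow> int) set set" where
  "cokernel V M = supported_on V // lattice_cong V M"

lemma row_lattice_memI: "(\<lambda>v. if v \<in> V then (\<Sum>u\<in>V. c u * M u v) else 0) \<in> row_lattice V M"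
  unfolding row_lattice_def by blast

lemma row_lattice_memE:
  assumes "x \<in> row_lattice V M"
  obtains c where "x = (\<lambda>v. if v \<in> V then (\<Sum>u\<in>V. c u * M u v) else 0)"
  using assms unfolding row_lattice_def by blast

lemma row_lattice_add:
  assumes "x \<in> row_lattice V M" "y \<in> row_lattice V M"
  shows "(\<lambda>v. x v + y v) \<in> row_lattice V M"
proof -
  obtain c where "x = (\<lambda>v. if v \<in> V then (\<Sum>u\<in>V. c u * M u v) else 0)"
    using assms(1) by (rule row_lattice_memE)
  moreover obtain e where "y = (\<lambda>v. if v \<in> V then (\<Sum>u\<in>V. e u * M u v) else 0)"
    using assms(2) by (rule row_lattice_memE)
  ultimately have "(\<lambda>v. x v + y v) = (\<lambda>v. if v \<in> V then (\<Sum>u\<in>V. (c u + e u) * M u v) else 0)"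
    by (auto simp: distrib_right sum.distrib)
  then show ?thesis by (simp add: row_lattice_memI)
qed

lemma row_lattice_scale:
  assumes "x \<in> row_lattice V M"
  shows "(\<lambda>v. a * x v) \<in> row_lattice V M"
proof -
  obtain c where "x = (\<lambda>v. if v \<in> V then (\<Sum>u\<in>V. c u * M u v) else 0)"
    using assms by (rule row_lattice_memE)
  then have "(\<lambda>v. a * x v) = (\<lambda>v. if v \<in> V then (\<Sum>u\<in>V. (a * c u) * M u v) else 0)"
    by (auto simp: sum_distrib_left mult.assoc)
  then show ?thesis by (simp add: row_lattice_memI)
qed

lemma zero_in_row_lattice: "(\<lambda>_. 0) \<in> row_lattice V M"
  using row_lattice_scale[OF row_lattice_memI, of 0] by simp

lemma row_in_row_lattice:
  assumes "finite V" "w \<in> V"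
  shows "(\<lambda>v. if v \<in> V then M w v else 0) \<in> row_lattice V M"
  using row_lattice_memI[of V "\<lambda>u. if u = w then 1 else 0" M] assms
  by (simp add: if_distrib[of "\<lambda>c. c * _"] cong: if_cong)

lemma equiv_lattice_cong: "equiv (supported_on V) (lattice_cong V M)"
proof (rule equivI)
  show "lattice_cong V M \<subseteq> supported_on V \<times> supported_on V"
    unfolding lattice_cong_def by auto
  show "refl_on (supported_on V) (lattice_cong V M)"
    unfolding refl_on_def lattice_cong_def by (auto simp: zero_in_row_lattice fun_diff_def)
  show "sym (lattice_cong V M)"
  proof (rule symI)
    fix x y assume "(x, y) \<in> lattice_cong V M"
    then show "(y, x) \<in> lattice_cong V M"
      using row_lattice_scale[of "x - y" V M "-1"] unfolding lattice_cong_def by (simp add: fun_diff_def)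
  qed
  show "trans (lattice_cong V M)"
  proof (rule transI)
    fix x y z assume "(x, y) \<in> lattice_cong V M" "(y, z) \<in> lattice_cong V M"
    then show "(x, z) \<in> lattice_cong V M"
      using row_lattice_add[of "x - y" V M "y - z"] unfolding lattice_cong_def by (simp add: fun_diff_def)
  qed
qed

lemma card_quotient_transversal:
  assumes "equiv S r" and "R \<subseteq> S"
    and "\<And>x. x \<in> S \<Longrightarrow> \<exists>y\<in>R. (x, y) \<in> r"
    and "\<And>x y. x \<in> R \<Longrightarrow> y \<in> R \<Longrightarrow> (x, y) \<in> r \<Longrightarrow> x = y"
  shows "card (S // r) = card R"
proof -
  have "bij_betw (\<lambda>x. r `` {x}) R (S // r)"
  proof (rule bij_betw_imageI)
    show "inj_on (\<lambda>x. r `` {x}) R"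
      using assms by (intro inj_onI) (meson eq_equiv_class subsetD)
    show "(\<lambda>x. r `` {x}) ` R = S // r"
    proof
      show "(\<lambda>x. r `` {x}) ` R \<subseteq> S // r" using assms(2) by (auto intro: quotientI)
      show "S // r \<subseteq> (\<lambda>x. r `` {x}) ` R"
      proof
        fix X assume "X \<in> S // r"
        then obtain x where "x \<in> S" "X = r `` {x}" by (auto elim: quotientE)
        moreover obtain y where "y \<in> R" "(x, y) \<in> r" using assms(3)[OF \<open>x \<in> S\<close>] by blast
        ultimately show "X \<in> (\<lambda>x. r `` {x}) ` R" using equiv_class_eq[OF assms(1)] by blast
      qed
    qed
  qed
  then show ?thesis by (simp add: bij_betw_same_card)
qed

lemma card_quotient_bij:
  assumes g: "bij_betw g S S'" and "r \<subseteq> S \<times> S" and "r' \<subseteq> S' \<times> S'"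
    and rel: "\<And>x y. x \<in> S \<Longrightarrow> y \<in> S \<Longrightarrow> (g x, g y) \<in> r' \<longleftrightarrow> (x, y) \<in> r"
  shows "card (S' // r') = card (S // r)"
proof -
  have image_class: "g ` (r `` {x}) = r' `` {g x}" if "x \<in> S" for x
  proof
    show "g ` (r `` {x}) \<subseteq> r' `` {g x}" using assms that by auto
    show "r' `` {g x} \<subseteq> g ` (r `` {x})"
    proof
      fix z assume "z \<in> r' `` {g x}"
      then obtain y where "y \<in> S" "z = g y" using assms(3) g by (auto simp: bij_betw_def)
      then show "z \<in> g ` (r `` {x})" using rel that \<open>z \<in> r' `` {g x}\<close> by auto
    qed
  qed
  have "image g ` (S // r) = S' // r'"
    unfolding quotient_def using image_class g by (auto simp: bij_betw_def)
  moreover have "inj_on (image g) (S // r)"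
    by (rule inj_on_subset[OF inj_on_image_Pow]) (use g assms(2) in \<open>auto simp: bij_betw_def quotient_def\<close>)
  ultimately show ?thesis by (metis card_image)
qed

lemma row_lattice_cong:
  "(\<And>u v. u \<in> V \<Longrightarrow> v \<in> V \<Longrightarrow> M u v = M' u v) \<Longrightarrow> row_lattice V M = row_lattice V M'"
  unfolding row_lattice_def by (intro Collect_cong ex_cong1) (auto intro!: ext sum.cong)

lemma cokernel_cong_row_lattice:
  "row_lattice V M = row_lattice V M' \<Longrightarrow> cokernel V M = cokernel V M'"
  unfolding cokernel_def lattice_cong_def by simp

lemma row_lattice_reindex:
  assumes bij: "bij_betw \<phi> I V" and z: "z \<in> supported_on V"
  shows "(\<lambda>i. if i \<in> I then z (\<phi> i) else 0) \<in> row_lattice I (\<lambda>i j. M (\<phi> i) (\<phi> j))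
    \<longleftrightarrow> z \<in> row_lattice V M"
proof
  assume "(\<lambda>i. if i \<in> I then z (\<phi> i) else 0) \<in> row_lattice I (\<lambda>i j. M (\<phi> i) (\<phi> j))"
  then obtain c where c: "(\<lambda>i. if i \<in> I then z (\<phi> i) else 0)
      = (\<lambda>j. if j \<in> I then (\<Sum>i\<in>I. c i * M (\<phi> i) (\<phi> j)) else 0)"
    by (rule row_lattice_memE)
  define \<psi> where "\<psi> = inv_into I \<phi>"
  have "z = (\<lambda>v. if v \<in> V then (\<Sum>u\<in>V. c (\<psi> u) * M u v) else 0)"
  proof
    fix v show "z v = (if v \<in> V then (\<Sum>u\<in>V. c (\<psi> u) * M u v) else 0)"
    proof (cases "v \<in> V")
      case True
      then have "\<psi> v \<in> I" "\<phi> (\<psi> v) = v"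
        using bij unfolding \<psi>_def by (auto simp: bij_betw_def inv_into_into f_inv_into_f)
      then have "z v = (\<Sum>i\<in>I. c i * M (\<phi> i) v)" using fun_cong[OF c, of "\<psi> v"] by simp
      also have "\<dots> = (\<Sum>u\<in>V. c (\<psi> u) * M u v)"
        using bij unfolding \<psi>_def
        by (subst sum.reindex_bij_betw[OF bij, symmetric]) (auto simp: bij_betw_def)
      finally show ?thesis using True by simp
    qed (use z in \<open>auto simp: supported_on_def\<close>)
  qed
  then show "z \<in> row_lattice V M" by (simp add: row_lattice_memI)
next
  assume "z \<in> row_lattice V M"
  then obtain c where c: "z = (\<lambda>v. if v \<in> V then (\<Sum>u\<in>V. c u * M u v) else 0)"
    by (rule row_lattice_memE)
  have "(\<lambda>i. if i \<in> I then z (\<phi> i) else 0)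
      = (\<lambda>j. if j \<in> I then (\<Sum>i\<in>I. c (\<phi> i) * M (\<phi> i) (\<phi> j)) else 0)"
    using bij by (auto simp: c bij_betw_def sum.reindex)
  then show "(\<lambda>i. if i \<in> I then z (\<phi> i) else 0) \<in> row_lattice I (\<lambda>i j. M (\<phi> i) (\<phi> j))"
    by (simp add: row_lattice_memI)
qed

lemma card_cokernel_reindex:
  assumes bij: "bij_betw \<phi> I V"
  shows "card (cokernel I (\<lambda>i j. M (\<phi> i) (\<phi> j))) = card (cokernel V M)"
  unfolding cokernel_def
proof (rule card_quotient_bij)
  define T where "T z = (\<lambda>i. if i \<in> I then z (\<phi> i) else 0)" for z :: "_ \<Rightarrow> int"
  define \<psi> where "\<psi> = inv_into I \<phi>"
  show "bij_betw T (supported_on V) (supported_on I)"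
  proof (rule bij_betw_byWitness[where f' = "\<lambda>y v. if v \<in> V then y (\<psi> v) else 0"])
    show "\<forall>z\<in>supported_on V. (\<lambda>v. if v \<in> V then T z (\<psi> v) else 0) = z"
      using bij unfolding T_def \<psi>_def supported_on_def
      by (auto simp: bij_betw_def inv_into_into f_inv_into_f)
    show "\<forall>y\<in>supported_on I. T (\<lambda>v. if v \<in> V then y (\<psi> v) else 0) = y"
      using bij unfolding T_def \<psi>_def supported_on_def
      by (auto simp: bij_betw_def inv_into_f_f)
  qed (auto simp: T_def supported_on_def)
  show "lattice_cong V M \<subseteq> supported_on V \<times> supported_on V"
    "lattice_cong I (\<lambda>i j. M (\<phi> i) (\<phi> j)) \<subseteq> supported_on I \<times> supported_on I"
    unfolding lattice_cong_def by auto
  fix x y assume "x \<in> supported_on V" "y \<in> supported_on V"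
  moreover have "T x - T y = T (x - y)" by (auto simp: T_def)
  moreover have "T z \<in> supported_on I" for z by (simp add: T_def supported_on_def)
  moreover have "x - y \<in> supported_on V" using calculation by (simp add: supported_on_def)
  ultimately show "(T x, T y) \<in> lattice_cong I (\<lambda>i j. M (\<phi> i) (\<phi> j)) \<longleftrightarrow> (x, y) \<in> lattice_cong V M"
    unfolding lattice_cong_def using row_lattice_reindex[OF bij] by (simp add: T_def)
qed

section \<open>The order of a cokernel is the absolute determinant\<close>

lemma index_mult_mat_sum:
  assumes "A \<in> carrier_mat n n" "B \<in> carrier_mat n n" "i < n" "j < n"
  shows "(A * B) $$ (i, j) = (\<Sum>k<n. A $$ (i, k) * B $$ (k, j))"
  using assms by (simp add: scalar_prod_def atLeast0LessThan)

abbreviation mat_lattice :: "nat \<Rightarrow> int mat \<Rightarrow> (nat \<Rightarrow> int) set" where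
  "mat_lattice n A \<equiv> row_lattice {..<n} (\<lambda>i j. A $$ (i, j))"

lemma mat_lattice_mult_left_subset:
  assumes "E \<in> carrier_mat n n" "A \<in> carrier_mat n n"
  shows "mat_lattice n (E * A) \<subseteq> mat_lattice n A"
proof
  fix x assume "x \<in> mat_lattice n (E * A)"
  then obtain c where c: "x = (\<lambda>j. if j \<in> {..<n} then (\<Sum>i\<in>{..<n}. c i * (E * A) $$ (i, j)) else 0)"
    by (rule row_lattice_memE)
  have "(\<Sum>i<n. c i * (E * A) $$ (i, j)) = (\<Sum>k<n. (\<Sum>i<n. c i * E $$ (i, k)) * A $$ (k, j))"
    if "j < n" for j
  proof -
    have "(\<Sum>i<n. c i * (E * A) $$ (i, j)) = (\<Sum>i<n. \<Sum>k<n. c i * E $$ (i, k) * A $$ (k, j))"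
      using assms that by (simp add: index_mult_mat_sum sum_distrib_left mult.assoc del: index_mult_mat)
    also have "\<dots> = (\<Sum>k<n. (\<Sum>i<n. c i * E $$ (i, k)) * A $$ (k, j))"
      by (subst sum.swap) (simp add: sum_distrib_right)
    finally show ?thesis .
  qed
  then have "x = (\<lambda>j. if j \<in> {..<n} then (\<Sum>k\<in>{..<n}. (\<Sum>i<n. c i * E $$ (i, k)) * A $$ (k, j)) else 0)"
    by (auto simp: c)
  then show "x \<in> mat_lattice n A" by (simp only: row_lattice_memI)
qed

lemma mat_lattice_mult_left_invertible:
  assumes E: "E \<in> carrier_mat n n" and F: "F \<in> carrier_mat n n" and FE: "F * E = 1\<^sub>m n"
    and A: "A \<in> carrier_mat n n"
  shows "mat_lattice n (E * A) = mat_lattice n A"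
proof
  show "mat_lattice n (E * A) \<subseteq> mat_lattice n A" using E A by (rule mat_lattice_mult_left_subset)
  have "F * (E * A) = A" using E F A FE by (simp flip: assoc_mult_mat[OF F E A])
  then show "mat_lattice n A \<subseteq> mat_lattice n (E * A)"
    using mat_lattice_mult_left_subset[OF F mult_carrier_mat[OF E A]] by simp
qed

lemma mat_lattice_addrow:
  assumes "A \<in> carrier_mat n n" "k < n" "l < n" "k \<noteq> l"
  shows "mat_lattice n (addrow a k l A) = mat_lattice n A"
  using mat_lattice_mult_left_invertible[OF addrow_mat_carrier addrow_mat_carrier
      addrow_mat_inv[of k n l "- a", simplified] \<open>A \<in> carrier_mat n n\<close>] assms
  by (simp add: addrow_mat)

lemma mat_lattice_swaprows:
  assumes "A \<in> carrier_mat n n" "k < n" "l < n"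
  shows "mat_lattice n (swaprows k l A) = mat_lattice n A"
  using mat_lattice_mult_left_invertible[OF swaprows_mat_carrier swaprows_mat_carrier
      swaprows_mat_inv \<open>A \<in> carrier_mat n n\<close>] assms
  by (simp add: swaprows_mat)

definition diag_box :: "nat \<Rightarrow> int mat \<Rightarrow> (nat \<Rightarrow> int) set" where
  "diag_box n B = {x \<in> supported_on {..<n}. \<forall>i<n. 0 \<le> x i \<and> x i < \<bar>B $$ (i, i)\<bar>}"

lemma diag_box_reduce:
  assumes B: "B \<in> carrier_mat n n" "upper_triangular B" "\<forall>i<n. B $$ (i, i) \<noteq> 0"
    and x: "x \<in> supported_on {..<n}"
  shows "\<exists>y\<in>diag_box n B. x - y \<in> mat_lattice n B"
proof -
  have "\<exists>y\<in>supported_on {..<n}. x - y \<in> mat_lattice n B \<and> (\<forall>i<m. 0 \<le> y i \<and> y i < \<bar>B $$ (i, i)\<bar>)"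
    if "m \<le> n" for m
    using that
  proof (induction m)
    case 0
    show ?case using x zero_in_row_lattice by (intro bexI[of _ x]) (auto simp: fun_diff_def)
  next
    case (Suc m)
    then have "m \<le> n" by simp
    then obtain y where y: "y \<in> supported_on {..<n}" "x - y \<in> mat_lattice n B"
      "\<forall>i<m. 0 \<le> y i \<and> y i < \<bar>B $$ (i, i)\<bar>" using Suc.IH by blast
    have m: "m < n" using Suc.prems by simp
    define b where "b = B $$ (m, m)"
    define c where "c = sgn b * (y m div \<bar>b\<bar>)"
    define row where "row = (\<lambda>j. if j \<in> {..<n} then B $$ (m, j) else 0)"
    define y' where "y' = (\<lambda>j. y j - c * row j)"
    have "y' \<in> supported_on {..<n}" using y(1) by (auto simp: y'_def row_def supported_on_def)
    moreover have "x - y' \<in> mat_lattice n B"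
    proof -
      have "x - y' = (\<lambda>j. (x - y) j + c * row j)" by (auto simp: y'_def)
      then show ?thesis
        using row_lattice_add[OF y(2) row_lattice_scale[OF row_in_row_lattice]] m by (simp add: row_def)
    qed
    moreover have "0 \<le> y' i \<and> y' i < \<bar>B $$ (i, i)\<bar>" if "i < Suc m" for i
    proof (cases "i < m")
      case True
      then have "row i = 0" using B(1,2) m by (auto simp: row_def)
      then show ?thesis using y(3) True by (simp add: y'_def)
    next
      case False
      have "sgn b * b = \<bar>b\<bar>" by (simp add: abs_sgn mult.commute)
      then have "y' m = y m mod \<bar>b\<bar>"
        using m by (simp add: y'_def row_def c_def b_def algebra_simps minus_div_mult_eq_mod[symmetric])
      moreover have "i = m" using False that by simp
      ultimately show ?thesis using B(3) m by (simp add: b_def)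
    qed
    ultimately show ?case by blast
  qed
  from this[of n] show ?thesis by (auto simp: diag_box_def)
qed

lemma diag_box_unique:
  assumes B: "B \<in> carrier_mat n n" "upper_triangular B"
    and x: "x \<in> diag_box n B" and y: "y \<in> diag_box n B" and xy: "x - y \<in> mat_lattice n B"
  shows "x = y"
proof -
  obtain c where c: "x - y = (\<lambda>j. if j \<in> {..<n} then (\<Sum>i\<in>{..<n}. c i * B $$ (i, j)) else 0)"
    using xy by (rule row_lattice_memE)
  have c0: "c i = 0" if "i < n" for i
    using that
  proof (induction i rule: less_induct)
    case (less i)
    have "(\<Sum>k<n. c k * B $$ (k, i)) = (\<Sum>k<n. if k = i then c i * B $$ (i, i) else 0)"
    proof (rule sum.cong)
      fix k assume "k \<in> {..<n}"
      then show "c k * B $$ (k, i) = (if k = i then c i * B $$ (i, i) else 0)"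
        using less.IH[of k] upper_triangularD[OF B(2), of i k] B(1)
        by (cases k i rule: linorder_cases) auto
    qed simp
    then have "x i - y i = c i * B $$ (i, i)" using fun_cong[OF c, of i] less.prems by simp
    moreover have "\<bar>x i - y i\<bar> < \<bar>B $$ (i, i)\<bar>"
    proof -
      have "0 \<le> x i" "x i < \<bar>B $$ (i, i)\<bar>" "0 \<le> y i" "y i < \<bar>B $$ (i, i)\<bar>"
        using x y less.prems by (auto simp: diag_box_def)
      then show ?thesis by linarith
    qed
    ultimately have "\<bar>c i\<bar> * \<bar>B $$ (i, i)\<bar> < 1 * \<bar>B $$ (i, i)\<bar>" by (simp add: abs_mult)
    then show "c i = 0" by (metis abs_ge_zero mult_right_less_imp_less zero_less_abs_iff
        int_one_le_iff_zero_less not_le)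
  qed
  show "x = y"
  proof
    fix j show "x j = y j"
      using fun_cong[OF c, of j] c0 x y by (cases "j < n") (auto simp: diag_box_def supported_on_def)
  qed
qed

lemma card_diag_box: "card (diag_box n B) = (\<Prod>i<n. nat \<bar>B $$ (i, i)\<bar>)"
proof -
  let ?P = "PiE {..<n} (\<lambda>i. {0..<\<bar>B $$ (i, i)\<bar>})"
  have "bij_betw (\<lambda>x. restrict x {..<n}) (diag_box n B) ?P"
  proof (rule bij_betw_byWitness[where f' = "\<lambda>f j. if j < n then f j else 0"])
    show "\<forall>x\<in>diag_box n B. (\<lambda>j. if j < n then restrict x {..<n} j else 0) = x"
      unfolding diag_box_def supported_on_def by (auto intro!: ext)
    show "\<forall>f\<in>?P. restrict (\<lambda>j. if j < n then f j else 0) {..<n} = f"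
      by (auto simp: PiE_def extensional_def intro!: ext)
    show "(\<lambda>x. restrict x {..<n}) ` diag_box n B \<subseteq> ?P"
    proof (rule image_subsetI)
      fix x assume "x \<in> diag_box n B"
      then show "restrict x {..<n} \<in> ?P" unfolding diag_box_def by (simp add: PiE_iff)
    qed
    show "(\<lambda>f j. if j < n then f j else 0) ` ?P \<subseteq> diag_box n B"
    proof (rule image_subsetI)
      fix f assume "f \<in> ?P"
      then have "\<forall>i<n. f i \<in> {0..<\<bar>B $$ (i, i)\<bar>}" by (simp add: PiE_iff)
      then show "(\<lambda>j. if j < n then f j else 0) \<in> diag_box n B"
        unfolding diag_box_def supported_on_def by simp
    qed
  qed
  then have "card (diag_box n B) = card ?P" by (rule bij_betw_same_card)
  then show ?thesis by (simp add: card_PiE)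
qed

lemma prod_list_diag_mat: "A \<in> carrier_mat n n \<Longrightarrow> prod_list (diag_mat A) = (\<Prod>i<n. A $$ (i, i))"
  by (simp add: diag_mat_def prod.distinct_set_conv_list[symmetric] atLeast0LessThan)

lemma card_cokernel_upper_triangular:
  assumes B: "B \<in> carrier_mat n n" "upper_triangular B" and "det B \<noteq> 0"
  shows "card (cokernel {..<n} (\<lambda>i j. B $$ (i, j))) = nat \<bar>det B\<bar>"
proof -
  have det: "det B = (\<Prod>i<n. B $$ (i, i))"
    using det_upper_triangular[OF B(2,1)] prod_list_diag_mat[OF B(1)] by simp
  then have "\<forall>i<n. B $$ (i, i) \<noteq> 0" using \<open>det B \<noteq> 0\<close> by auto
  then have "card (cokernel {..<n} (\<lambda>i j. B $$ (i, j))) = card (diag_box n B)"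
    unfolding cokernel_def
  proof (intro card_quotient_transversal equiv_lattice_cong)
    show "diag_box n B \<subseteq> supported_on {..<n}" by (auto simp: diag_box_def)
    show "\<exists>y\<in>diag_box n B. (x, y) \<in> lattice_cong {..<n} (\<lambda>i j. B $$ (i, j))"
      if "x \<in> supported_on {..<n}" and "\<forall>i<n. B $$ (i, i) \<noteq> 0" for x
      using diag_box_reduce[OF B that(2,1)] that(1) by (auto simp: lattice_cong_def diag_box_def)
    show "x = y" if "x \<in> diag_box n B" "y \<in> diag_box n B"
      "(x, y) \<in> lattice_cong {..<n} (\<lambda>i j. B $$ (i, j))" for x y
      using diag_box_unique[OF B that(1,2)] that(3) by (simp add: lattice_cong_def)
  qed
  moreover have "int (card (diag_box n B)) = \<bar>det B\<bar>"
    unfolding card_diag_box det abs_prod by simp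
  ultimately show ?thesis by simp
qed

definition lattice_equiv :: "nat \<Rightarrow> int mat \<Rightarrow> int mat \<Rightarrow> bool" where
  "lattice_equiv n A B \<longleftrightarrow>
     B \<in> carrier_mat n n \<and> mat_lattice n B = mat_lattice n A \<and> \<bar>det B\<bar> = \<bar>det A\<bar>"

definition cleared_columns :: "nat \<Rightarrow> int mat \<Rightarrow> bool" where
  "cleared_columns k B \<longleftrightarrow> (\<forall>i j. i < dim_row B \<longrightarrow> j < k \<longrightarrow> j < i \<longrightarrow> B $$ (i, j) = 0)"

lemma lattice_equiv_addrow:
  assumes "lattice_equiv n A B" "k < n" "l < n" "k \<noteq> l"
  shows "lattice_equiv n A (addrow a k l B)"
  using assms mat_lattice_addrow[of B n k l a] det_addrow[of l n k B a]
  by (auto simp: lattice_equiv_def)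

lemma lattice_equiv_swaprows:
  assumes "lattice_equiv n A B" "k < n" "l < n" "k \<noteq> l"
  shows "lattice_equiv n A (swaprows k l B)"
  using assms mat_lattice_swaprows[of B n k l] det_swaprows[of k n l B]
  by (auto simp: lattice_equiv_def)

lemma column_euclid_step:
  assumes B: "lattice_equiv n A B" "cleared_columns k B"
    and ps: "k \<le> p" "p < n" "k \<le> s" "s < n" "p \<noteq> s"
    and nz: "B $$ (s, k) \<noteq> 0" "\<bar>B $$ (s, k)\<bar> \<le> \<bar>B $$ (p, k)\<bar>"
  shows "\<exists>B'. lattice_equiv n A B' \<and> cleared_columns k B' \<and>
    (\<Sum>i\<in>{k..<n}. nat \<bar>B' $$ (i, k)\<bar>) < (\<Sum>i\<in>{k..<n}. nat \<bar>B $$ (i, k)\<bar>)"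
proof (intro exI conjI)
  have carrier: "B \<in> carrier_mat n n" using B(1) by (simp add: lattice_equiv_def)
  define B' where "B' = addrow (- (B $$ (p, k) div B $$ (s, k))) p s B"
  show "lattice_equiv n A B'"
    unfolding B'_def using B(1) ps by (intro lattice_equiv_addrow) auto
  show "cleared_columns k B'"
    using B(2) carrier ps by (auto simp: B'_def cleared_columns_def)
  have "B' $$ (p, k) = B $$ (p, k) mod B $$ (s, k)"
    using carrier ps by (simp add: B'_def minus_div_mult_eq_mod[symmetric] algebra_simps)
  then have "\<bar>B' $$ (p, k)\<bar> < \<bar>B $$ (s, k)\<bar>" using nz(1) abs_mod_less by simp
  then have less: "nat \<bar>B' $$ (p, k)\<bar> < nat \<bar>B $$ (p, k)\<bar>" using nz(2) by linarith
  have same: "B' $$ (i, k) = B $$ (i, k)" if "i \<noteq> p" "i < n" for i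
    using carrier ps that by (simp add: B'_def)
  show "(\<Sum>i\<in>{k..<n}. nat \<bar>B' $$ (i, k)\<bar>) < (\<Sum>i\<in>{k..<n}. nat \<bar>B $$ (i, k)\<bar>)"
  proof (rule sum_strict_mono_ex1)
    show "\<forall>i\<in>{k..<n}. nat \<bar>B' $$ (i, k)\<bar> \<le> nat \<bar>B $$ (i, k)\<bar>"
      using same less by (metis atLeastLessThan_iff order.refl less_imp_le)
    show "\<exists>i\<in>{k..<n}. nat \<bar>B' $$ (i, k)\<bar> < nat \<bar>B $$ (i, k)\<bar>"
      using less ps by auto
  qed simp
qed

lemma column_pivot_step:
  assumes B: "lattice_equiv n A B" "cleared_columns k B" and k: "k < n"
    and single: "\<And>i i'. k \<le> i \<Longrightarrow> i < n \<Longrightarrow> k \<le> i' \<Longrightarrow> i' < n \<Longrightarrow>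
      B $$ (i, k) \<noteq> 0 \<Longrightarrow> B $$ (i', k) \<noteq> 0 \<Longrightarrow> i = i'"
  shows "\<exists>B'. lattice_equiv n A B' \<and> cleared_columns (Suc k) B'"
proof (cases "\<exists>i. k < i \<and> i < n \<and> B $$ (i, k) \<noteq> 0")
  case True
  then obtain i where i: "k < i" "i < n" "B $$ (i, k) \<noteq> 0" by blast
  have carrier: "B \<in> carrier_mat n n" using B(1) by (simp add: lattice_equiv_def)
  have zero: "B $$ (r, k) = 0" if "r \<noteq> i" "k \<le> r" "r < n" for r
    using single[of r i] i that by auto
  have "cleared_columns (Suc k) (swaprows k i B)"
    unfolding cleared_columns_def
  proof (intro allI impI)
    fix r j assume r: "r < dim_row (swaprows k i B)" and j: "j < Suc k" "j < r"
    consider "r = k" | "r = i" | "r \<noteq> k" "r \<noteq> i" by blast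
    then show "swaprows k i B $$ (r, j) = 0"
    proof cases
      case 1
      then show ?thesis using B(2) carrier i j by (auto simp: cleared_columns_def)
    next
      case 2
      then show ?thesis using B(2) carrier i j zero[of k] by (auto simp: cleared_columns_def less_Suc_eq)
    next
      case 3
      then show ?thesis using B(2) carrier r j zero[of r] by (auto simp: cleared_columns_def less_Suc_eq)
    qed
  qed
  then show ?thesis using lattice_equiv_swaprows[OF B(1) k i(2)] i(1) by blast
next
  case False
  have "B \<in> carrier_mat n n" using B(1) by (simp add: lattice_equiv_def)
  with False B(2) have "cleared_columns (Suc k) B"
    unfolding cleared_columns_def by (metis carrier_matD(1) less_SucE)
  then show ?thesis using B(1) by blast
qed

lemma clear_column:
  assumes "k < n"
  shows "lattice_equiv n A B \<Longrightarrow> cleared_columns k B \<Longrightarrow>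
    \<exists>B'. lattice_equiv n A B' \<and> cleared_columns (Suc k) B'"
proof (induction "\<Sum>i\<in>{k..<n}. nat \<bar>B $$ (i, k)\<bar>" arbitrary: B rule: less_induct)
  case less
  show ?case
  proof (cases "\<exists>i i'. k \<le> i \<and> i < n \<and> k \<le> i' \<and> i' < n \<and> i \<noteq> i' \<and>
      B $$ (i, k) \<noteq> 0 \<and> B $$ (i', k) \<noteq> 0")
    case True
    then obtain p s where "k \<le> p" "p < n" "k \<le> s" "s < n" "p \<noteq> s"
      "B $$ (s, k) \<noteq> 0" "\<bar>B $$ (s, k)\<bar> \<le> \<bar>B $$ (p, k)\<bar>"
      by (metis linorder_le_cases)
    then show ?thesis using column_euclid_step[OF less.prems] less.hyps by blast
  next
    case False
    then show ?thesis using column_pivot_step[OF less.prems assms] by blast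
  qed
qed

lemma triangularize:
  assumes "A \<in> carrier_mat n n"
  shows "\<exists>B. lattice_equiv n A B \<and> upper_triangular B"
proof -
  have "\<exists>B. lattice_equiv n A B \<and> cleared_columns k B" if "k \<le> n" for k
    using that
  proof (induction k)
    case 0
    show ?case using assms by (intro exI[of _ A]) (simp add: lattice_equiv_def cleared_columns_def)
  next
    case (Suc k)
    then show ?case using clear_column[of k n A] by auto
  qed
  then obtain B where "lattice_equiv n A B" "cleared_columns n B" by blast
  then show ?thesis
    by (intro exI[of _ B]) (auto simp: lattice_equiv_def cleared_columns_def upper_triangular_def)
qed

theorem card_cokernel_det:
  assumes "A \<in> carrier_mat n n" and "det A \<noteq> 0"
  shows "card (cokernel {..<n} (\<lambda>i j. A $$ (i, j))) = nat \<bar>det A\<bar>"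
proof -
  obtain B where B: "lattice_equiv n A B" "upper_triangular B"
    using triangularize[OF assms(1)] by blast
  then have "cokernel {..<n} (\<lambda>i j. A $$ (i, j)) = cokernel {..<n} (\<lambda>i j. B $$ (i, j))"
    by (intro cokernel_cong_row_lattice) (simp add: lattice_equiv_def)
  moreover have "card (cokernel {..<n} (\<lambda>i j. B $$ (i, j))) = nat \<bar>det B\<bar>"
    using B assms(2) by (intro card_cokernel_upper_triangular) (auto simp: lattice_equiv_def)
  ultimately show ?thesis using B(1) by (simp add: lattice_equiv_def)
qed

section \<open>The tree and its matrix \<open>\<Delta>\<close>\<close>

primrec repunit :: "real \<Rightarrow> nat \<Rightarrow> real" where
  "repunit b 0 = 1"
| "repunit b (Suc m) = b * repunit b m + 1"

lemma repunit_ge_one: "0 \<le> b \<Longrightarrow> 1 \<le> repunit b m"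
  by (induction m) auto

lemma repunit_closed_form: "repunit b m * (b - 1) = b ^ (m + 1) - 1"
proof (induction m)
  case (Suc m)
  have "repunit b (Suc m) * (b - 1) = b * (repunit b m * (b - 1)) + b - 1"
    by (simp add: algebra_simps)
  also have "\<dots> = b * (b ^ (m + 1) - 1) + b - 1" using Suc by simp
  also have "\<dots> = b ^ (Suc m + 1) - 1" by (simp add: algebra_simps)
  finally show ?case .
qed simp

lemma repunit_Suc': "repunit b (Suc m) = b ^ Suc m + repunit b m"
proof (induction m)
  case (Suc m)
  have "repunit b (Suc (Suc m)) = b * repunit b (Suc m) + 1" by simp
  also have "\<dots> = b * (b ^ Suc m + repunit b m) + 1" using Suc by simp
  also have "\<dots> = b ^ Suc (Suc m) + repunit b (Suc m)" by (simp add: algebra_simps)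
  finally show ?case .
qed simp

lemma repunit_Suc_Suc: "repunit b (Suc (Suc m)) + b * repunit b m = (b + 1) * repunit b (Suc m)"
  by (simp add: algebra_simps)

lemma snoc_less: "(xs :: 'a :: linorder list) < xs @ [c]"
  unfolding list_less_def lexord_def by blast

locale tree_branching =
  fixes d :: nat
  assumes two_le_d: "2 \<le> d"
begin

definition \<beta> :: real where
  "\<beta> = real d - 1"

lemma d_eq_beta: "real d = \<beta> + 1"
  by (simp add: \<beta>_def)

lemma one_le_beta: "1 \<le> \<beta>"
  using two_le_d by (simp add: \<beta>_def)

lemma two_le_beta: "3 \<le> d \<Longrightarrow> 2 \<le> \<beta>"
  by (simp add: \<beta>_def)

abbreviation q :: "nat \<Rightarrow> real" where
  "q \<equiv> repunit \<beta>"

lemma q_ge_one: "1 \<le> q m"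
  using one_le_beta by (intro repunit_ge_one) simp

end

locale sandpile_tree = tree_branching +
  fixes h :: nat
begin

abbreviation V :: "nat list set" where
  "V \<equiv> tree_vertices d h"

lemma mem_V_iff:
  "xs \<in> V \<longleftrightarrow> length xs \<le> h \<and> (\<forall>i<length xs. if i = 0 then xs ! i < d else xs ! i < d - 1)"
  unfolding tree_vertices_def by simp

lemma finite_V: "finite V"
proof (rule finite_subset)
  show "V \<subseteq> {xs. set xs \<subseteq> {..<d} \<and> length xs \<le> h}"
  proof
    fix xs assume "xs \<in> V"
    then have "length xs \<le> h" "\<forall>i<length xs. xs ! i < d"
      unfolding mem_V_iff by (auto split: if_splits)
    then show "xs \<in> {xs. set xs \<subseteq> {..<d} \<and> length xs \<le> h}" by (auto simp: in_set_conv_nth)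
  qed
  show "finite {xs. set xs \<subseteq> {..<d} \<and> length xs \<le> h}"
    by (rule finite_lists_length_le) simp
qed

lemma Nil_in_V: "[] \<in> V"
  by (simp add: mem_V_iff)

lemma snoc_in_V_iff:
  assumes "v \<in> V" "length v < h"
  shows "v @ [c] \<in> V \<longleftrightarrow> c < (if v = [] then d else d - 1)"
proof -
  have "v @ [c] \<in> V \<longleftrightarrow>
      (\<forall>i<Suc (length v). if i = 0 then (v @ [c]) ! i < d else (v @ [c]) ! i < d - 1)"
    using assms(2) unfolding mem_V_iff by simp
  also have "\<dots> \<longleftrightarrow> (if length v = 0 then c < d else c < d - 1)"
    using assms(1) unfolding mem_V_iff by (auto simp: nth_append less_Suc_eq)
  finally show ?thesis by simp
qed

definition children :: "nat list \<Rightarrow> nat list set" where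
  "children v = {x \<in> V. \<exists>c. x = v @ [c]}"

lemma children_eq:
  assumes "v \<in> V" "length v < h"
  shows "children v = (\<lambda>c. v @ [c]) ` {..<(if v = [] then d else d - 1)}"
proof (intro subset_antisym subsetI)
  fix x assume "x \<in> children v"
  then obtain c where "x = v @ [c]" "v @ [c] \<in> V" by (auto simp: children_def)
  then show "x \<in> (\<lambda>c. v @ [c]) ` {..<(if v = [] then d else d - 1)}"
    using snoc_in_V_iff[OF assms] by blast
next
  fix x assume "x \<in> (\<lambda>c. v @ [c]) ` {..<(if v = [] then d else d - 1)}"
  then obtain c where "x = v @ [c]" "c < (if v = [] then d else d - 1)" by blast
  then show "x \<in> children v"
    using snoc_in_V_iff[OF assms] by (auto simp: children_def)
qed

lemma children_of_leaf: "length v = h \<Longrightarrow> children v = {}"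
  by (auto simp: children_def mem_V_iff)

lemma finite_children: "finite (children v)"
  using finite_V by (simp add: children_def)

definition level :: "nat \<Rightarrow> nat list set" where
  "level k = {v \<in> V. length v = k}"

lemma level_0: "level 0 = {[]}"
  using Nil_in_V by (auto simp: level_def)

lemma level_Suc:
  assumes "Suc m \<le> h"
  shows "level (Suc m) = (\<lambda>(c, ys). c # ys) ` ({..<d} \<times> {ys. set ys \<subseteq> {..<d - 1} \<and> length ys = m})"
proof (intro subset_antisym subsetI)
  fix xs assume "xs \<in> level (Suc m)"
  then have xs: "length xs = Suc m" "\<forall>i<Suc m. if i = 0 then xs ! i < d else xs ! i < d - 1"
    by (auto simp: level_def mem_V_iff)
  then obtain c ys where "xs = c # ys" by (cases xs) auto
  moreover have "c < d" using xs(2)[rule_format, of 0] \<open>xs = c # ys\<close> by simp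
  moreover have "length ys = m" using xs(1) \<open>xs = c # ys\<close> by simp
  moreover have "set ys \<subseteq> {..<d - 1}"
  proof
    fix y assume "y \<in> set ys"
    then obtain j where "j < length ys" "ys ! j = y" by (auto simp: in_set_conv_nth)
    then show "y \<in> {..<d - 1}"
      using xs(2)[rule_format, of "Suc j"] \<open>xs = c # ys\<close> \<open>length ys = m\<close> by simp
  qed
  ultimately show "xs \<in> (\<lambda>(c, ys). c # ys) ` ({..<d} \<times> {ys. set ys \<subseteq> {..<d - 1} \<and> length ys = m})"
    by auto
next
  fix xs assume "xs \<in> (\<lambda>(c, ys). c # ys) ` ({..<d} \<times> {ys. set ys \<subseteq> {..<d - 1} \<and> length ys = m})"
  then obtain c ys where cys: "xs = c # ys" "c < d" "set ys \<subseteq> {..<d - 1}" "length ys = m"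
    by auto
  have "\<forall>i<Suc m. if i = 0 then xs ! i < d else xs ! i < d - 1"
  proof (intro allI impI)
    fix i assume "i < Suc m"
    show "if i = 0 then xs ! i < d else xs ! i < d - 1"
    proof (cases i)
      case (Suc j)
      then have "ys ! j \<in> set ys" using \<open>i < Suc m\<close> cys by simp
      then show ?thesis using Suc cys by auto
    qed (use cys in simp)
  qed
  moreover have "length xs = Suc m" using cys by simp
  ultimately show "xs \<in> level (Suc m)" unfolding level_def mem_V_iff using assms by simp
qed

lemma card_level_Suc:
  assumes "Suc m \<le> h"
  shows "card (level (Suc m)) = d * (d - 1) ^ m"
proof -
  have "inj_on (\<lambda>(c, ys). c # ys) ({..<d} \<times> {ys. set ys \<subseteq> {..<d - 1} \<and> length ys = m})"
    by (auto simp: inj_on_def)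
  then show ?thesis
    unfolding level_Suc[OF assms] by (simp add: card_image card_cartesian_product card_lists_length_eq)
qed

lemma sum_by_levels:
  "(\<Sum>v\<in>V. g (length v)) = g 0 + (\<Sum>k<h. real (d * (d - 1) ^ k) * g (Suc k))"
proof -
  have "(\<Sum>v\<in>V. g (length v)) = (\<Sum>k\<le>h. \<Sum>v\<in>level k. g (length v))"
    unfolding level_def by (rule sum.group[symmetric]) (use finite_V in \<open>auto simp: mem_V_iff\<close>)
  also have "\<dots> = (\<Sum>k\<le>h. real (card (level k)) * g k)"
    by (rule sum.cong) (auto simp: level_def)
  also have "\<dots> = g 0 + (\<Sum>k<h. real (d * (d - 1) ^ k) * g (Suc k))"
    by (simp add: sum.atMost_shift level_0 card_level_Suc)
  finally show ?thesis .
qed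

lemma sandpile_group_eq_cokernel: "sandpile_group d h = cokernel V (tree_Delta d)"
  unfolding sandpile_group_def cokernel_def lattice_cong_def ZV_def tree_lattice_def
    supported_on_def row_lattice_def ..

text \<open>In the lexicographic order a vertex precedes its children; this makes the factor \<open>U\<close>
  of the decomposition below lower triangular.\<close>

definition vertex_list :: "nat list list" where
  "vertex_list = sorted_list_of_set V"

abbreviation N :: nat where
  "N \<equiv> card V"

abbreviation vertex :: "nat \<Rightarrow> nat list" where
  "vertex i \<equiv> vertex_list ! i"

lemma vertex_list_basic: "distinct vertex_list" "set vertex_list = V" "length vertex_list = N"
    "sorted_wrt (<) vertex_list"
  unfolding vertex_list_def using finite_V
  by (auto simp: sorted_list_of_set.length_sorted_key_list_of_set strict_sorted_list_of_set)

lemma bij_vertex: "bij_betw vertex {..<N} V"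
  by (rule bij_betw_nth) (use vertex_list_basic in auto)

lemma vertex_in_V: "i < N \<Longrightarrow> vertex i \<in> V"
  using bij_vertex by (meson bij_betwE lessThan_iff)

lemma vertex_less_imp_less:
  assumes "i < N" "j < N" "vertex i < vertex j"
  shows "i < j"
proof (rule ccontr)
  assume "\<not> i < j"
  then have "j = i \<or> j < i" by linarith
  then have "vertex j \<le> vertex i"
    using sorted_wrt_nth_less[OF vertex_list_basic(4), of j i] assms vertex_list_basic(3) by auto
  then show False using assms(3) by simp
qed

definition Delta_mat :: "int mat" where
  "Delta_mat = mat N N (\<lambda>(i, j). tree_Delta d (vertex i) (vertex j))"

lemma card_sandpile_group_det:
  assumes "det Delta_mat \<noteq> 0"
  shows "card (sandpile_group d h) = nat \<bar>det Delta_mat\<bar>"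
proof -
  have "card (sandpile_group d h) = card (cokernel {..<N} (\<lambda>i j. tree_Delta d (vertex i) (vertex j)))"
    unfolding sandpile_group_eq_cokernel card_cokernel_reindex[OF bij_vertex] ..
  also have "\<dots> = card (cokernel {..<N} (\<lambda>i j. Delta_mat $$ (i, j)))"
    by (intro arg_cong[where f = card] cokernel_cong_row_lattice row_lattice_cong)
      (simp add: Delta_mat_def)
  also have "\<dots> = nat \<bar>det Delta_mat\<bar>"
    using assms by (intro card_cokernel_det) (simp add: Delta_mat_def)
  finally show ?thesis .
qed

text \<open>Eliminating the vertices from the leaves upwards, a vertex at depth \<open>k \<ge> 1\<close> gets the pivot
  \<open>\<alpha>_k\<close>, where \<open>\<alpha>_h = d\<close> and \<open>\<alpha>_k = d - (d - 1) / \<alpha>_(k+1)\<close>; these are ratios of repunits.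
  The root then gets \<open>d - d / \<alpha>_1\<close>.\<close>

definition pivot :: "nat \<Rightarrow> real" where
  "pivot k = (if k = 0 then real d * \<beta> ^ h / q h else q (h - k + 1) / q (h - k))"

lemma pivot_pos: "0 < pivot k"
  unfolding pivot_def
  using q_ge_one[of h] q_ge_one[of "h - k"] q_ge_one[of "h - k + 1"] one_le_beta two_le_d
  by (auto simp del: repunit.simps intro!: divide_pos_pos)

lemma pivot_leaf: "0 < h \<Longrightarrow> pivot h = real d"
  unfolding pivot_def by (simp add: d_eq_beta)

lemma pivot_root_empty: "h = 0 \<Longrightarrow> pivot 0 = real d"
  unfolding pivot_def by simp

lemma pivot_inner:
  assumes "1 \<le> k" "k < h"
  shows "pivot k + \<beta> / pivot (Suc k) = real d"
proof -
  obtain m where m: "h - k = Suc m" using assms(2) by (metis Suc_diff_Suc)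
  then have "h - Suc k = m" by simp
  then have "pivot k + \<beta> / pivot (Suc k) = q (Suc (Suc m)) / q (Suc m) + \<beta> * q m / q (Suc m)"
    using assms m by (simp add: pivot_def)
  also have "\<dots> = (q (Suc (Suc m)) + \<beta> * q m) / q (Suc m)"
    by (simp add: add_divide_distrib del: repunit.simps)
  also have "\<dots> = \<beta> + 1"
    using repunit_Suc_Suc[of \<beta> m] q_ge_one[of "Suc m"] by (simp del: repunit.simps)
  finally show ?thesis by (simp add: d_eq_beta)
qed

lemma pivot_root:
  assumes "0 < h"
  shows "pivot 0 + real d / pivot 1 = real d"
proof -
  obtain m where m: "h = Suc m" using assms by (metis Suc_pred)
  have "pivot 0 = real d * \<beta> ^ Suc m / q (Suc m)" "pivot 1 = q (Suc m) / q m"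
    unfolding pivot_def using m by (simp_all del: repunit.simps)
  then have "pivot 0 + real d / pivot 1 = real d * (\<beta> ^ Suc m + q m) / q (Suc m)"
    by (simp add: add_divide_distrib distrib_left del: repunit.simps)
  also have "\<dots> = real d"
    using q_ge_one[of "Suc m"] repunit_Suc'[of \<beta> m] by (simp del: repunit.simps)
  finally show ?thesis .
qed

lemma pivot_recurrence:
  assumes "v \<in> V"
  shows "pivot (length v) + (\<Sum>x\<in>children v. 1 / pivot (length x)) = real d"
proof (cases "length v < h")
  case True
  define r where "r = (if v = [] then d else d - 1)"
  have "(\<Sum>x\<in>children v. 1 / pivot (length x)) = real r / pivot (Suc (length v))"
    unfolding children_eq[OF assms True] r_def[symmetric]
    by (subst sum.reindex) (auto simp: inj_on_def)
  then show ?thesis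
  proof (cases "v = []")
    case True
    then show ?thesis using \<open>length v < h\<close> pivot_root \<open>_ = real r / _\<close> by (simp add: r_def)
  next
    case False
    then have "1 \<le> length v" by (cases v) auto
    moreover have "real r = \<beta>" using False two_le_d by (simp add: r_def of_nat_diff \<beta>_def)
    ultimately show ?thesis
      using \<open>length v < h\<close> pivot_inner \<open>_ = real r / _\<close> by simp
  qed
next
  case False
  then have "length v = h" using assms by (simp add: mem_V_iff)
  then have "children v = {}" by (rule children_of_leaf)
  moreover have "pivot (length v) = real d"
    using \<open>length v = h\<close> pivot_leaf pivot_root_empty by (metis gr0I)
  ultimately show ?thesis by simp
qed

definition ldl_U :: "nat list \<Rightarrow> nat list \<Rightarrow> real" where
  "ldl_U x y = (if x = y then 1 else if \<exists>c. x = y @ [c] then - 1 / pivot (length x) else 0)"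

lemma ldl_U_mult_pivot:
  "ldl_U x v * pivot (length x) = (if x = v then pivot (length v) else if \<exists>c. x = v @ [c] then -1 else 0)"
  using pivot_pos[of "length x"] by (auto simp: ldl_U_def)

lemma sum_ldl_column:
  assumes "v \<in> V"
  shows "(\<Sum>x\<in>V. ldl_U x v * pivot (length x) * ldl_U x w)
    = pivot (length v) * ldl_U v w - (\<Sum>x\<in>children v. ldl_U x w)"
proof -
  have "(\<Sum>x\<in>V. ldl_U x v * pivot (length x) * ldl_U x w)
      = (\<Sum>x\<in>insert v (children v). ldl_U x v * pivot (length x) * ldl_U x w)"
    by (rule sum.mono_neutral_right)
      (use finite_V assms in \<open>auto simp: children_def ldl_U_mult_pivot\<close>)
  also have "\<dots> = pivot (length v) * ldl_U v w + (\<Sum>x\<in>children v. - ldl_U x w)"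
  proof -
    have "v \<notin> children v" by (simp add: children_def)
    moreover have "(\<Sum>x\<in>children v. ldl_U x v * pivot (length x) * ldl_U x w)
        = (\<Sum>x\<in>children v. - ldl_U x w)"
      by (rule sum.cong) (auto simp: children_def ldl_U_mult_pivot)
    ultimately show ?thesis
      unfolding sum.insert[OF finite_children \<open>v \<notin> children v\<close>] by (simp add: ldl_U_mult_pivot)
  qed
  finally show ?thesis by (simp add: sum_negf)
qed

lemma sum_children_ldl_U:
  "(\<Sum>x\<in>children v. ldl_U x w) = (if w \<in> children v then 1 else 0)
     - (if w = v then (\<Sum>x\<in>children v. 1 / pivot (length x)) else 0)"
proof -
  have "(\<Sum>x\<in>children v. ldl_U x w)
      = (\<Sum>x\<in>children v. (if x = w then 1 else 0) - (if w = v then 1 / pivot (length x) else 0))"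
  proof (rule sum.cong)
    fix x assume "x \<in> children v"
    then obtain c where "x = v @ [c]" by (auto simp: children_def)
    then show "ldl_U x w = (if x = w then 1 else 0) - (if w = v then 1 / pivot (length x) else 0)"
      by (auto simp: ldl_U_def)
  qed simp
  also have "\<dots> = (if w \<in> children v then 1 else 0)
     - (if w = v then (\<Sum>x\<in>children v. 1 / pivot (length x)) else 0)"
    by (simp add: sum_subtractf finite_children)
  finally show ?thesis .
qed

lemma ldl_entry:
  assumes v: "v \<in> V" and w: "w \<in> V"
  shows "(\<Sum>x\<in>V. ldl_U x v * pivot (length x) * ldl_U x w) = real_of_int (tree_Delta d v w)"
proof (cases "w = v")
  case True
  have "v \<notin> children v" by (simp add: children_def)
  moreover have "\<not> tree_adj v v" by (simp add: tree_adj_def)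
  moreover have "ldl_U v v = 1" by (simp add: ldl_U_def)
  ultimately show ?thesis
    using True pivot_recurrence[OF v]
    by (simp add: sum_ldl_column[OF v] sum_children_ldl_U tree_Delta_def)
next
  case False
  have "pivot (length v) * ldl_U v w = (if \<exists>c. v = w @ [c] then -1 else 0)"
    using False ldl_U_mult_pivot[of v w] by (simp add: mult.commute)
  moreover have "w \<in> children v \<longleftrightarrow> (\<exists>c. w = v @ [c])" using w by (simp add: children_def)
  moreover have "\<not> ((\<exists>c. w = v @ [c]) \<and> (\<exists>c. v = w @ [c]))" by auto
  ultimately show ?thesis
    using False by (auto simp: sum_ldl_column[OF v] sum_children_ldl_U tree_Delta_def tree_adj_def)
qed

definition U_mat :: "real mat" where
  "U_mat = mat N N (\<lambda>(i, j). ldl_U (vertex i) (vertex j))"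

definition D_mat :: "real mat" where
  "D_mat = mat N N (\<lambda>(i, j). if i = j then pivot (length (vertex i)) else 0)"

lemma U_mat_carrier: "U_mat \<in> carrier_mat N N"
  and D_mat_carrier: "D_mat \<in> carrier_mat N N"
  by (simp_all add: U_mat_def D_mat_def)

lemma Delta_mat_ldl: "map_mat real_of_int Delta_mat = transpose_mat U_mat * (D_mat * U_mat)"
proof (rule eq_matI)
  have Ut: "transpose_mat U_mat \<in> carrier_mat N N" and DU: "D_mat * U_mat \<in> carrier_mat N N"
    using U_mat_carrier D_mat_carrier by auto
  fix i j assume "i < dim_row (transpose_mat U_mat * (D_mat * U_mat))"
    and "j < dim_col (transpose_mat U_mat * (D_mat * U_mat))"
  then have i: "i < N" and j: "j < N" using Ut DU by auto
  have DU_entry: "(D_mat * U_mat) $$ (l, j) = pivot (length (vertex l)) * ldl_U (vertex l) (vertex j)"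
    if l: "l < N" for l
  proof -
    have "(D_mat * U_mat) $$ (l, j) = (\<Sum>k<N. D_mat $$ (l, k) * U_mat $$ (k, j))"
      by (rule index_mult_mat_sum[OF D_mat_carrier U_mat_carrier l j])
    also have "\<dots> = (\<Sum>k<N. if k = l then pivot (length (vertex l)) * ldl_U (vertex l) (vertex j) else 0)"
      by (rule sum.cong) (use l j in \<open>auto simp: D_mat_def U_mat_def\<close>)
    finally show ?thesis using l by simp
  qed
  have "(transpose_mat U_mat * (D_mat * U_mat)) $$ (i, j)
      = (\<Sum>l<N. transpose_mat U_mat $$ (i, l) * (D_mat * U_mat) $$ (l, j))"
    by (rule index_mult_mat_sum[OF Ut DU i j])
  also have "\<dots> = (\<Sum>l<N. ldl_U (vertex l) (vertex i) * pivot (length (vertex l)) * ldl_U (vertex l) (vertex j))"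
    by (rule sum.cong) (use i j DU_entry in \<open>auto simp: U_mat_def\<close>)
  also have "\<dots> = (\<Sum>x\<in>V. ldl_U x (vertex i) * pivot (length x) * ldl_U x (vertex j))"
    using sum.reindex_bij_betw[OF bij_vertex] by simp
  also have "\<dots> = real_of_int (tree_Delta d (vertex i) (vertex j))"
    by (rule ldl_entry[OF vertex_in_V[OF i] vertex_in_V[OF j]])
  finally show "map_mat real_of_int Delta_mat $$ (i, j) = (transpose_mat U_mat * (D_mat * U_mat)) $$ (i, j)"
    using i j by (simp add: Delta_mat_def)
qed (simp_all add: Delta_mat_def U_mat_def)

lemma det_U_mat: "det U_mat = 1"
proof -
  have "det U_mat = prod_list (diag_mat U_mat)"
  proof (rule det_lower_triangular[OF _ U_mat_carrier])
    fix i j assume ij: "i < j" "j < N"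
    have "vertex i \<noteq> vertex j" using ij bij_vertex by (auto simp: bij_betw_def inj_on_def)
    moreover have "vertex i \<noteq> vertex j @ [c]" for c
      using snoc_less[of "vertex j" c] vertex_less_imp_less[of j i] ij by auto
    ultimately show "U_mat $$ (i, j) = 0" using ij by (simp add: U_mat_def ldl_U_def)
  qed
  also have "\<dots> = 1"
    unfolding prod_list_diag_mat[OF U_mat_carrier] by (simp add: U_mat_def ldl_U_def)
  finally show ?thesis .
qed

lemma det_D_mat: "det D_mat = (\<Prod>v\<in>V. pivot (length v))"
proof -
  have "det D_mat = (\<Prod>i<N. pivot (length (vertex i)))"
    using det_upper_triangular[OF _ D_mat_carrier] prod_list_diag_mat[OF D_mat_carrier]
    by (simp add: upper_triangular_def D_mat_def)
  also have "\<dots> = (\<Prod>v\<in>V. pivot (length v))"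
    using prod.reindex_bij_betw[OF bij_vertex] by simp
  finally show ?thesis .
qed

lemma card_sandpile_group_eq_prod: "real (card (sandpile_group d h)) = (\<Prod>v\<in>V. pivot (length v))"
proof -
  have "real_of_int (det Delta_mat) = det (transpose_mat U_mat * (D_mat * U_mat))"
    by (simp flip: Delta_mat_ldl)
  also have "\<dots> = (\<Prod>v\<in>V. pivot (length v))"
    using U_mat_carrier D_mat_carrier
    by (simp add: det_mult[of _ N] det_transpose det_U_mat det_D_mat)
  finally have det: "real_of_int (det Delta_mat) = (\<Prod>v\<in>V. pivot (length v))" .
  moreover have pos: "(\<Prod>v\<in>V. pivot (length v)) > 0" by (simp add: prod_pos pivot_pos)
  ultimately have "det Delta_mat \<noteq> 0" by auto
  then show ?thesis using det pos by (simp add: card_sandpile_group_det)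
qed

end

section \<open>Asymptotics of \<open>log_b |G(d,h)|\<close>\<close>

context tree_branching
begin

definition log_q :: "nat \<Rightarrow> real" where
  "log_q m = log \<beta> (q m)"

definition c_term :: "nat \<Rightarrow> real" where
  "c_term m = log_q m / \<beta> ^ Suc m"

lemma log_q_bounds:
  assumes "3 \<le> d"
  shows "0 \<le> log_q m" "log_q m \<le> real m + 1"
proof -
  have \<beta>: "2 \<le> \<beta>" using assms by (rule two_le_beta)
  show "0 \<le> log_q m" using \<beta> q_ge_one[of m] by (simp add: log_q_def)
  have "q m * 1 \<le> q m * (\<beta> - 1)" using \<beta> q_ge_one[of m] by (intro mult_left_mono) auto
  then have "q m \<le> \<beta> ^ (m + 1)" using repunit_closed_form[of \<beta> m] by simp
  then have "log_q m \<le> log \<beta> (\<beta> ^ (m + 1))"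
    using \<beta> q_ge_one[of m] by (simp add: log_q_def)
  also have "\<dots> = real (m + 1) * log \<beta> \<beta>" using \<beta> by (intro log_nat_power) simp
  also have "\<dots> = real m + 1" using \<beta> by simp
  finally show "log_q m \<le> real m + 1" .
qed

lemma summable_c_term:
  assumes "3 \<le> d"
  shows "summable c_term"
proof (rule summable_comparison_test')
  show "summable (\<lambda>m. 3 / 2 * (3 / 4 :: real) ^ m)" by (intro summable_mult summable_geometric) simp
  have \<beta>: "2 \<le> \<beta>" using assms by (rule two_le_beta)
  fix m
  have "norm (c_term m) = log_q m / \<beta> ^ Suc m"
    using log_q_bounds[OF assms, of m] \<beta> by (simp add: c_term_def)
  also have "\<dots> \<le> (real m + 1) / \<beta> ^ Suc m"
    using log_q_bounds[OF assms, of m] \<beta> by (intro divide_right_mono) auto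
  also have "\<dots> \<le> (real m + 1) / 2 ^ Suc m"
    using \<beta> by (intro divide_left_mono power_mono) auto
  also have "\<dots> \<le> 2 * (3 / 2) ^ Suc m / 2 ^ Suc m"
  proof (rule divide_right_mono)
    have "real m + 1 \<le> 2 * (1 + real (Suc m) * (1 / 2))" by (simp add: field_simps)
    also have "\<dots> \<le> 2 * (1 + 1 / 2) ^ Suc m"
      by (intro mult_left_mono Bernoulli_inequality) auto
    finally show "real m + 1 \<le> 2 * (3 / 2) ^ Suc m" by simp
  qed simp
  also have "\<dots> = 2 * ((3 / 2) / 2) ^ Suc m"
    by (simp only: power_divide times_divide_eq_right)
  also have "\<dots> = 3 / 2 * (3 / 4) ^ m"
    by simp
  finally show "norm (c_term m) \<le> 3 / 2 * (3 / 4) ^ m" .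
qed

lemma c_const_eq:
  assumes "3 \<le> d"
  shows "c_const d = real d * (\<beta> - 1) * (\<Sum>m. c_term (Suc m))"
proof -
  have \<beta>: "2 \<le> \<beta>" using assms by (rule two_le_beta)
  have "(real d - 1) powr (- 2 - real n) * log (real d - 1) (((real d - 1) ^ (n + 2) - 1) / (real d - 2))
      = c_term (Suc n)" for n
  proof -
    have "- 2 - real n = - real (n + 2)" by simp
    then have "(real d - 1) powr (- 2 - real n) = \<beta> powr (- real (n + 2))"
      by (simp only: \<beta>_def)
    also have "\<dots> = inverse (\<beta> powr real (n + 2))" by (rule powr_minus)
    also have "\<beta> powr real (n + 2) = \<beta> ^ (n + 2)" using \<beta> by (intro powr_realpow) simp
    finally have "(real d - 1) powr (- 2 - real n) = 1 / \<beta> ^ (n + 2)" by (simp add: divide_inverse)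
    moreover have "((real d - 1) ^ (n + 2) - 1) / (real d - 2) = q (Suc n)"
      using repunit_closed_form[of \<beta> "Suc n"] \<beta> by (simp add: \<beta>_def field_simps del: repunit.simps)
    ultimately show ?thesis by (simp add: c_term_def log_q_def \<beta>_def)
  qed
  then show ?thesis by (simp add: c_const_def \<beta>_def)
qed

lemma c_term_0: "c_term 0 = 0"
  by (simp add: c_term_def log_q_def)

lemma c_term_Suc_pos:
  assumes "3 \<le> d"
  shows "0 < c_term (Suc m)"
proof -
  have \<beta>: "2 \<le> \<beta>" using assms by (rule two_le_beta)
  have "1 < q (Suc m)" using \<beta> q_ge_one[of m] by (simp add: less_add_same_cancel2 order_less_le_trans)
  then show ?thesis using \<beta> by (simp add: c_term_def log_q_def)
qed

lemma c_series_pos: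
  assumes "3 \<le> d"
  shows "0 < (\<Sum>m. c_term (Suc m))"
  using summable_c_term[OF assms] c_term_Suc_pos[OF assms]
  by (intro suminf_pos) (simp_all add: summable_Suc_iff)

lemma weighted_partial_sums_tendsto:
  assumes "3 \<le> d"
  shows "(\<lambda>h. \<Sum>m<h. \<beta> * c_term (Suc m) - c_term m) \<longlonglongrightarrow> (\<beta> - 1) * (\<Sum>m. c_term (Suc m))"
proof -
  have summable: "summable c_term" by (rule summable_c_term[OF assms])
  then have "(\<lambda>h. \<Sum>m<h. c_term (Suc m)) \<longlonglongrightarrow> (\<Sum>m. c_term (Suc m))"
    by (intro summable_LIMSEQ) (simp add: summable_Suc_iff)
  moreover have "(\<lambda>h. \<Sum>m<h. c_term m) \<longlonglongrightarrow> (\<Sum>m. c_term (Suc m))"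
    using summable_LIMSEQ[OF summable] by (simp add: suminf_split_head[OF summable] c_term_0)
  ultimately have "(\<lambda>h. \<beta> * (\<Sum>m<h. c_term (Suc m)) - (\<Sum>m<h. c_term m))
      \<longlonglongrightarrow> \<beta> * (\<Sum>m. c_term (Suc m)) - (\<Sum>m. c_term (Suc m))"
    by (intro tendsto_intros)
  then show ?thesis by (simp add: sum_subtractf sum_distrib_left algebra_simps)
qed

lemma log_q_error_tendsto_zero:
  assumes "3 \<le> d"
  shows "(\<lambda>h. (log \<beta> (real d) + real h - log_q h) / \<beta> ^ h) \<longlonglongrightarrow> 0"
proof (rule Lim_null_comparison)
  have \<beta>: "2 \<le> \<beta>" using assms by (rule two_le_beta)
  define A where "A = \<bar>log \<beta> (real d)\<bar>"
  show "\<forall>\<^sub>F h in sequentially. norm ((log \<beta> (real d) + real h - log_q h) / \<beta> ^ h) \<le> (A + real h + 1) / 2 ^ h"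
  proof (rule always_eventually, rule allI)
    fix h
    have "\<bar>log \<beta> (real d) + real h - log_q h\<bar> \<le> A + real h + 1"
      using log_q_bounds[OF assms, of h] by (simp add: A_def)
    moreover have "(2 :: real) ^ h \<le> \<beta> ^ h" using \<beta> by (intro power_mono) auto
    ultimately show "norm ((log \<beta> (real d) + real h - log_q h) / \<beta> ^ h) \<le> (A + real h + 1) / 2 ^ h"
      by (simp add: abs_divide) (intro frac_le, auto simp: A_def)
  qed
  show "(\<lambda>h. (A + real h + 1) / 2 ^ h) \<longlonglongrightarrow> 0" by real_asymp
qed

end

context sandpile_tree
begin

lemma log_pivot_root:
  assumes "3 \<le> d"
  shows "log \<beta> (pivot 0) = log \<beta> (real d) + real h - log_q h"
proof -
  have \<beta>: "2 \<le> \<beta>" using assms by (rule two_le_beta)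
  have "log \<beta> (pivot 0) = log \<beta> (real d * \<beta> ^ h) - log \<beta> (q h)"
    using \<beta> q_ge_one[of h] assms by (simp add: pivot_def log_divide_pos del: repunit.simps)
  also have "log \<beta> (real d * \<beta> ^ h) = log \<beta> (real d) + real h"
    using \<beta> assms by (simp add: log_mult log_nat_power)
  finally show ?thesis by (simp add: log_q_def)
qed

lemma log_pivot_Suc:
  "k < h \<Longrightarrow> log \<beta> (pivot (Suc k)) = log_q (h - k) - log_q (h - Suc k)"
  using q_ge_one[of "h - k"] q_ge_one[of "h - Suc k"]
  by (simp add: pivot_def log_q_def log_divide_pos Suc_diff_Suc del: repunit.simps)

lemma log_card_sandpile_group:
  assumes "3 \<le> d"
  shows "log \<beta> (real (card (sandpile_group d h)))
    = log \<beta> (real d) + real h - log_q h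
      + real d * \<beta> ^ h * (\<Sum>m<h. \<beta> * c_term (Suc m) - c_term m)"
proof -
  have \<beta>: "2 \<le> \<beta>" using assms by (rule two_le_beta)
  define f where "f k = real d * \<beta> ^ k * (log_q (h - k) - log_q (h - Suc k))" for k
  have "log \<beta> (real (card (sandpile_group d h))) = (\<Sum>v\<in>V. log \<beta> (pivot (length v)))"
    unfolding card_sandpile_group_eq_prod using pivot_pos finite_V
    by (simp add: log_def ln_prod sum_divide_distrib less_imp_neq[symmetric])
  also have "\<dots> = log \<beta> (pivot 0) + (\<Sum>k<h. f k)"
    unfolding sum_by_levels[of "\<lambda>k. log \<beta> (pivot k)"] using two_le_d
    by (simp add: f_def log_pivot_Suc of_nat_diff flip: \<beta>_def)
  also have "(\<Sum>k<h. f k) = (\<Sum>m<h. f (h - Suc m))"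
    by (rule sum.nat_diff_reindex[symmetric])
  also have "\<dots> = real d * \<beta> ^ h * (\<Sum>m<h. \<beta> * c_term (Suc m) - c_term m)"
    unfolding sum_distrib_left
  proof (rule sum.cong)
    fix m assume "m \<in> {..<h}"
    then have "\<beta> ^ (h - Suc m) = \<beta> ^ h / \<beta> ^ Suc m" "h - (h - Suc m) = Suc m"
      using \<beta> by (simp_all add: power_diff)
    then show "f (h - Suc m) = real d * \<beta> ^ h * (\<beta> * c_term (Suc m) - c_term m)"
      using \<beta> \<open>m \<in> {..<h}\<close> by (simp add: f_def c_term_def Suc_diff_Suc field_simps)
  qed simp
  finally show ?thesis using log_pivot_root[OF assms] by simp
qed

end

theorem corollary2p6:
  fixes d :: nat
  assumes "d \<ge> 3"
  shows "(\<lambda>h. log (real d - 1) (real (card (sandpile_group d h))))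
           \<sim>[at_top] (\<lambda>h. c_const d * (real d - 1) ^ h)"
proof -
  interpret tree_branching d using assms by unfold_locales simp
  define S where "S = (\<Sum>m. c_term (Suc m))"
  define E where "E h = log \<beta> (real d) + real h - log_q h" for h
  define P where "P h = (\<Sum>m<h. \<beta> * c_term (Suc m) - c_term m)" for h
  have \<beta>: "1 < \<beta>" using assms by (simp add: \<beta>_def)
  have S_pos: "0 < S" unfolding S_def using assms by (rule c_series_pos)
  have c: "c_const d = real d * (\<beta> - 1) * S" unfolding S_def using assms by (rule c_const_eq)
  then have c_pos: "0 < c_const d" using S_pos \<beta> assms by simp
  have ratio: "log \<beta> (real (card (sandpile_group d h))) / (c_const d * \<beta> ^ h)
      = E h / \<beta> ^ h / c_const d + real d / c_const d * P h" for h
  proof -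
    interpret sandpile_tree d h ..
    show ?thesis
      using c_pos \<beta> by (simp add: log_card_sandpile_group[OF assms] E_def P_def field_simps)
  qed
  have "(\<lambda>h. E h / \<beta> ^ h / c_const d + real d / c_const d * P h)
      \<longlonglongrightarrow> 0 / c_const d + real d / c_const d * ((\<beta> - 1) * S)"
    unfolding E_def P_def S_def
    using c_pos by (intro tendsto_intros log_q_error_tendsto_zero weighted_partial_sums_tendsto assms) auto
  also have "0 / c_const d + real d / c_const d * ((\<beta> - 1) * S) = 1"
    using \<beta> S_pos assms unfolding c by simp
  finally show ?thesis
    unfolding \<beta>_def[symmetric] using ratio by (intro asymp_equivI') simp
qed

end
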